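(* Let $S\subseteq\{1,\dots,p\}$, let $\rho_\lambda$ be $\mu$-amenable, and suppose $\mathcal L_n$ satisfies the $(\alpha,\tau)$ joint RSC condition. Let $\theta^\ast,\hat\theta\in\mathbb{R}^{p\times q}$ have all rows outside $S$ equal to zero, with $\|\theta^\ast\|_{1,2}\le R$ and $\|\hat\theta\|_{1,2}\le R$. Suppose $\hat\theta$ is a zero-subgradient point of the oracle objective, i.e. there is $\hat z\in\partial\|\hat\theta\|_{1,2}$ such that the rows indexed by $S$ of $\nabla\bar{\mathcal L}_n(\hat\theta)+\lambda\hat z$ vanish. Assume further $\|\nabla\mathcal L_n(\theta^\ast)\|_{\infty,2}\le\lambda/2$, $\lambda\le\alpha_2/(6R)$ and $n\ge\frac{16R^2\tau_2^2}{\alpha_2^2}\log p$. Then $\|\hat\theta-\theta^\ast\|_F\le1$.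
   Context: Notation: for $A\in\mathbb{R}^{p\times q}$, $A_{i:}$ row $i$, $A_{:j}$ column $j$; $\|A\|_{a,b}=(\sum_i\|A_{i:}\|_b^a)^{1/a}$ ($a=\infty$: max over $i$); $\|A\|_F$ Frobenius norm; $\langle A,B\rangle=\mathrm{tr}(A^TB)$. $\mathcal L_n(\theta)=\sum_{j=1}^q[\frac12\theta_{:j}^T\hat\Gamma^{(j)}\theta_{:j}-(\hat\gamma^{(j)})^T\theta_{:j}]$ for given symmetric PSD $\hat\Gamma^{(j)}$ and vectors $\hat\gamma^{(j)}$. Joint RSC: $\langle\nabla\mathcal L_n(\theta+\Delta)-\nabla\mathcal L_n(\theta),\Delta\rangle\ge\alpha_1\|\Delta\|_F^2-\tau_1\frac{\log p}{n}\|\Delta\|_{1,2}^2$ if $\|\Delta\|_F\le1$, and $\ge\alpha_2\|\Delta\|_F-\tau_2\sqrt{\frac{\log p}{n}}\|\Delta\|_{1,2}$ if $\|\Delta\|_F\ge1$. $\mu$-amenable: $\rho_\lambda$ symmetric with $\rho_\lambda(0)=0$, nondecreasing on $\mathbb{R}^+$, $\rho_\lambda(t)/t$ nonincreasing on $\mathbb{R}^+$, differentiable for $t\ne0$, $\rho_\lambda(t)+\frac\mu2t^2$ convex, $\lim_{t\to0^+}\rho'_\lambda(t)=\lambda$. $q_\lambda(t)=\lambda|t|-\rho_\lambda(t)$, $\bar{\mathcal L}_n(\theta)=\mathcal L_n(\theta)-\sum_iq_\lambda(\|\theta_{i:}\|_2)$. Subdifferential: $z\in\partial\|\theta\|_{1,2}$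 iff $z_{i:}=\theta_{i:}/\|\theta_{i:}\|_2$ when $\theta_{i:}\ne0$ and $\|z_{i:}\|_2\le1$ when $\theta_{i:}=0$. *)

theory Defs
  imports "HOL-Analysis.Analysis"
begin

text \<open>Matrices in R^{p x q} are rendered as real^'q^'p: row i is A$i, column j is column j A.
  The Euclidean norm on this type is the Frobenius norm, and the inner product is tr(A^T B).\<close>

definition norm12 :: "real^'q^'p \<Rightarrow> real" where
  "norm12 A = (\<Sum>i\<in>UNIV. norm (A $ i))"

definition norminf2 :: "real^'q^'p \<Rightarrow> real" where
  "norminf2 A = Max (range (\<lambda>i. norm (A $ i)))"

definition grad :: "('a::euclidean_space \<Rightarrow> real) \<Rightarrow> 'a \<Rightarrow> 'a" where
  "grad f x = (THE g. (f has_derivative (\<lambda>h. g \<bullet> h)) (at x))"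

definition Ln :: "('q \<Rightarrow> real^'p^'p) \<Rightarrow> ('q \<Rightarrow> real^'p) \<Rightarrow> real^'q^'p \<Rightarrow> real" where
  "Ln Gam gam \<theta> = (\<Sum>j\<in>UNIV. (1/2) * (column j \<theta> \<bullet> (Gam j *v column j \<theta>)) - gam j \<bullet> column j \<theta>)"

definition amenable :: "(real \<Rightarrow> real) \<Rightarrow> real \<Rightarrow> real \<Rightarrow> bool" where
  "amenable \<rho> lam \<mu> \<longleftrightarrow>
     \<mu> \<ge> 0 \<and>
     (\<forall>t. \<rho> (- t) = \<rho> t) \<and> \<rho> 0 = 0 \<and>
     (\<forall>s t. 0 \<le> s \<and> s \<le> t \<longrightarrow> \<rho> s \<le> \<rho> t) \<and>
     (\<forall>s t. 0 < s \<and> s \<le> t \<longrightarrow> \<rho> t / t \<le> \<rho> s / s) \<and>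
     (\<forall>t. t \<noteq> 0 \<longrightarrow> \<rho> differentiable (at t)) \<and>
     convex_on UNIV (\<lambda>t. \<rho> t + \<mu> / 2 * t\<^sup>2) \<and>
     ((deriv \<rho>) \<longlongrightarrow> lam) (at_right 0)"

definition qlam :: "(real \<Rightarrow> real) \<Rightarrow> real \<Rightarrow> real \<Rightarrow> real" where
  "qlam \<rho> lam t = lam * \<bar>t\<bar> - \<rho> t"

definition Lbar :: "('q \<Rightarrow> real^'p^'p) \<Rightarrow> ('q \<Rightarrow> real^'p) \<Rightarrow> (real \<Rightarrow> real) \<Rightarrow> real
    \<Rightarrow> real^'q^'p \<Rightarrow> real" where
  "Lbar Gam gam \<rho> lam \<theta> = Ln Gam gam \<theta> - (\<Sum>i\<in>UNIV. qlam \<rho> lam (norm (\<theta> $ i)))"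

definition joint_RSC :: "(real^'q^'p \<Rightarrow> real) \<Rightarrow> nat \<Rightarrow> real \<Rightarrow> real \<Rightarrow> real \<Rightarrow> real \<Rightarrow> bool" where
  "joint_RSC L n \<alpha>1 \<alpha>2 \<tau>1 \<tau>2 \<longleftrightarrow>
     \<alpha>1 > 0 \<and> \<alpha>2 > 0 \<and> \<tau>1 \<ge> 0 \<and> \<tau>2 \<ge> 0 \<and>
     (\<forall>\<theta> \<Delta>. norm \<Delta> \<le> 1 \<longrightarrow>
        (grad L (\<theta> + \<Delta>) - grad L \<theta>) \<bullet> \<Delta>
          \<ge> \<alpha>1 * (norm \<Delta>)\<^sup>2 - \<tau>1 * (ln (real CARD('p)) / real n) * (norm12 \<Delta>)\<^sup>2) \<and>
     (\<forall>\<theta> \<Delta>. norm \<Delta> \<ge> 1 \<longrightarrow>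
        (grad L (\<theta> + \<Delta>) - grad L \<theta>) \<bullet> \<Delta>
          \<ge> \<alpha>2 * norm \<Delta> - \<tau>2 * sqrt (ln (real CARD('p)) / real n) * norm12 \<Delta>)"

definition subgrad12 :: "real^'q^'p \<Rightarrow> real^'q^'p \<Rightarrow> bool" where
  "subgrad12 z \<theta> \<longleftrightarrow>
     (\<forall>i. (\<theta> $ i \<noteq> 0 \<longrightarrow> z $ i = \<theta> $ i /\<^sub>R norm (\<theta> $ i)) \<and>
          (\<theta> $ i = 0 \<longrightarrow> norm (z $ i) \<le> 1))"

end

theory Submission
  imports Defs
begin

text \<open>
  Put \<open>\<Delta> = \<theta>hat - \<theta>star\<close>; its rows vanish outside \<open>S\<close> and \<open>\<parallel>\<Delta>\<parallel>\<^sub>1\<^sub>,\<^sub>2 \<le> 2R\<close>.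
  Since \<open>q\<^sub>\<lambda>' = \<lambda> - \<rho>\<^sub>\<lambda>' \<in> [0, \<lambda>]\<close>, stationarity bounds every row of \<open>\<nabla>\<L>\<^sub>n(\<theta>hat)\<close> indexed by
  \<open>S\<close> by \<open>\<lambda>\<close>, so \<open>\<langle>\<nabla>\<L>\<^sub>n(\<theta>hat) - \<nabla>\<L>\<^sub>n(\<theta>star), \<Delta>\<rangle> \<le> (3\<lambda>/2)\<parallel>\<Delta>\<parallel>\<^sub>1\<^sub>,\<^sub>2 \<le> 3\<lambda>R \<le> \<alpha>\<^sub>2/2\<close>.
  If \<open>\<parallel>\<Delta>\<parallel>\<^sub>F \<ge> 1\<close>, the second RSC inequality together with the sample size bound gives
  the lower bound \<open>\<alpha>\<^sub>2\<parallel>\<Delta>\<parallel>\<^sub>F - \<alpha>\<^sub>2/2\<close> for the same inner product, whence \<open>\<parallel>\<Delta>\<parallel>\<^sub>F \<le> 1\<close>.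
\<close>

lemma grad_eqI:
  assumes "(f has_derivative (\<lambda>h. g \<bullet> h)) (at x)"
  shows "grad f x = g"
  unfolding grad_def
proof (rule the_equality)
  show "(f has_derivative (\<lambda>h. g \<bullet> h)) (at x)" by (fact assms)
next
  fix g' assume "(f has_derivative (\<lambda>h. g' \<bullet> h)) (at x)"
  then have "(\<lambda>h. g' \<bullet> h) = (\<lambda>h. g \<bullet> h)" using assms by (rule has_derivative_unique)
  then have "g' \<bullet> (g' - g) = g \<bullet> (g' - g)" by metis
  then have "(g' - g) \<bullet> (g' - g) = 0" by (simp add: inner_diff_left)
  then show "g' = g" by simp
qed

lemma has_derivative_grad:
  fixes f :: "'a::euclidean_space \<Rightarrow> real"
  assumes "f differentiable (at x)"
  shows "(f has_derivative (\<lambda>h. grad f x \<bullet> h)) (at x)"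
proof -
  obtain D where D: "(f has_derivative D) (at x)"
    using assms by (auto simp: differentiable_def)
  have "D h = adjoint D 1 \<bullet> h" for h
    using adjoint_works[OF has_derivative_linear[OF D], of h 1] by (simp add: inner_commute)
  then have "(f has_derivative (\<lambda>h. adjoint D 1 \<bullet> h)) (at x)"
    using D by (metis ext)
  then show ?thesis by (metis grad_eqI)
qed

lemma bounded_linear_column: "bounded_linear (\<lambda>A::real^'n^'m. column j A)"
  by (auto simp: linear_conv_bounded_linear[symmetric] column_def vec_eq_iff intro!: linearI)

lemma Ln_differentiable: "Ln Gam gam differentiable (at \<theta>)"
  unfolding Ln_def
  by (intro differentiable_sum differentiable_diff differentiable_mult differentiable_inner
      differentiable_const bounded_linear_imp_differentiable bounded_linear_column ballI
      bounded_linear_compose[OF matrix_vector_mul_bounded_linear bounded_linear_column]) simp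

lemma amenable_continuous:
  assumes "amenable \<rho> lam \<mu>"
  shows "continuous_on UNIV \<rho>"
proof -
  have cvx: "continuous_on UNIV (\<lambda>t. \<rho> t + \<mu> / 2 * t\<^sup>2)"
    using assms unfolding amenable_def by (intro convex_on_continuous) auto
  have "continuous_on UNIV (\<lambda>t. (\<rho> t + \<mu> / 2 * t\<^sup>2) - \<mu> / 2 * t\<^sup>2)"
    by (intro continuous_intros cvx)
  then show ?thesis by simp
qed

lemma amenable_ratio_tendsto:
  assumes "amenable \<rho> lam \<mu>"
  shows "((\<lambda>t. \<rho> t / t) \<longlongrightarrow> lam) (at_right 0)"
proof (rule tendstoI)
  fix e :: real assume "e > 0"
  have "\<forall>\<^sub>F t in at_right 0. dist (deriv \<rho> t) lam < e"
    using assms \<open>e > 0\<close> unfolding amenable_def by (blast intro: tendstoD)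
  then obtain b where "b > 0" and b: "\<And>z. 0 < z \<Longrightarrow> z < b \<Longrightarrow> dist (deriv \<rho> z) lam < e"
    unfolding eventually_at_right_field by auto
  have "dist (\<rho> t / t) lam < e" if t: "0 < t" "t < b" for t
  proof -
    obtain l z where z: "0 < z" "z < t" "(\<rho> has_real_derivative l) (at z)" "\<rho> t - \<rho> 0 = (t - 0) * l"
      using MVT[of 0 t \<rho>] t continuous_on_subset[OF amenable_continuous[OF assms]] assms
      by (auto simp: amenable_def)
    have "\<rho> t / t = deriv \<rho> z"
      using z t assms by (simp add: DERIV_imp_deriv amenable_def)
    then show ?thesis using b z t by simp
  qed
  with \<open>b > 0\<close> show "\<forall>\<^sub>F t in at_right 0. dist (\<rho> t / t) lam < e"
    unfolding eventually_at_right_field by auto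
qed

lemma amenable_ratio_le:
  assumes "amenable \<rho> lam \<mu>" and "0 < r"
  shows "\<rho> r / r \<le> lam"
proof (rule tendsto_lowerbound[OF amenable_ratio_tendsto[OF assms(1)]])
  show "\<forall>\<^sub>F t in at_right 0. \<rho> r / r \<le> \<rho> t / t"
    unfolding eventually_at_right_field using assms by (auto simp: amenable_def)
qed simp

lemma amenable_deriv_bounds:
  assumes amen: "amenable \<rho> lam \<mu>" and "0 < r"
  shows "0 \<le> deriv \<rho> r \<and> deriv \<rho> r \<le> lam"
proof -
  from amen have mono: "\<And>s t. 0 \<le> s \<Longrightarrow> s \<le> t \<Longrightarrow> \<rho> s \<le> \<rho> t"
    and ratio: "\<And>s t. 0 < s \<Longrightarrow> s \<le> t \<Longrightarrow> \<rho> t / t \<le> \<rho> s / s"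
    and "\<rho> differentiable (at r)"
    using \<open>0 < r\<close> unfolding amenable_def by auto
  then have "(\<rho> has_real_derivative deriv \<rho> r) (at r)"
    by (simp add: DERIV_deriv_iff_real_differentiable)
  then have quot: "((\<lambda>y. (\<rho> y - \<rho> r) / (y - r)) \<longlongrightarrow> deriv \<rho> r) (at_right r)"
    unfolding has_field_derivative_iff by (rule tendsto_mono[rotated]) (simp add: at_le)
  have right: "\<forall>\<^sub>F y in at_right r. r < y" by (rule eventually_at_right_less)
  have "0 \<le> deriv \<rho> r"
  proof (rule tendsto_lowerbound[OF quot])
    show "\<forall>\<^sub>F y in at_right r. 0 \<le> (\<rho> y - \<rho> r) / (y - r)"
      using right by eventually_elim (use mono \<open>0 < r\<close> in auto)
  qed simp
  moreover have "deriv \<rho> r \<le> \<rho> r / r"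
  proof (rule tendsto_upperbound[OF quot])
    show "\<forall>\<^sub>F y in at_right r. (\<rho> y - \<rho> r) / (y - r) \<le> \<rho> r / r"
      using right
    proof eventually_elim
      case (elim y)
      have "\<rho> y / y \<le> \<rho> r / r" using ratio \<open>0 < r\<close> elim by auto
      then have "\<rho> y - \<rho> r \<le> (y - r) * (\<rho> r / r)" using elim \<open>0 < r\<close> by (simp add: field_simps)
      then show ?case using elim by (simp add: field_simps)
    qed
  qed simp
  ultimately show ?thesis using amenable_ratio_le[OF amen \<open>0 < r\<close>] by linarith
qed

text \<open>\<open>qlam_grad \<rho> lam v\<close> is the gradient of \<open>v \<mapsto> q\<^sub>\<lambda>(\<parallel>v\<parallel>)\<close>; at \<open>v = 0\<close> it vanishes because
  \<open>\<rho>\<^sub>\<lambda>(t)/t \<rightarrow> \<lambda>\<close>, which is what makes \<open>\<bar>\<L>\<close> differentiable.\<close>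
definition qlam_grad :: "(real \<Rightarrow> real) \<Rightarrow> real \<Rightarrow> 'a::real_inner \<Rightarrow> 'a" where
  "qlam_grad \<rho> lam v = (if v = 0 then 0 else (lam - deriv \<rho> (norm v)) *\<^sub>R sgn v)"

lemma qlam_norm_has_derivative:
  fixes v :: "'a::real_inner"
  assumes amen: "amenable \<rho> lam \<mu>"
  shows "((\<lambda>x. qlam \<rho> lam (norm x)) has_derivative (\<lambda>h. qlam_grad \<rho> lam v \<bullet> h)) (at v)"
proof (cases "v = 0")
  case True
  have "\<rho> 0 = 0" using amen by (simp add: amenable_def)
  have "((\<lambda>t. \<bar>lam - \<rho> t / t\<bar>) \<longlongrightarrow> 0) (at_right 0)"
    using tendsto_diff[OF tendsto_const amenable_ratio_tendsto[OF amen], of lam]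
    by (intro tendsto_rabs_zero) simp
  then have "((\<lambda>h. \<bar>lam - \<rho> (norm h) / norm h\<bar>) \<longlongrightarrow> 0) (at (0::'a))"
    by (rule filterlim_compose)
      (auto simp: filterlim_at eventually_at_filter intro!: tendsto_norm_zero tendsto_ident_at)
  moreover have "\<forall>\<^sub>F h in at (0::'a). \<bar>lam - \<rho> (norm h) / norm h\<bar>
      = norm (qlam \<rho> lam (norm (0 + h)) - qlam \<rho> lam (norm 0) - 0 \<bullet> h) / norm h"
    using \<open>\<rho> 0 = 0\<close> by (auto simp: eventually_at_filter qlam_def field_simps abs_divide)
  ultimately show ?thesis
    using True by (auto simp: has_derivative_at qlam_grad_def intro: Lim_transform_eventually)
next
  case False
  have "(\<rho> has_real_derivative deriv \<rho> (norm v)) (at (norm v))"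
    using False amen by (simp add: amenable_def DERIV_deriv_iff_real_differentiable)
  then have "((\<lambda>x. qlam \<rho> lam (norm x)) has_derivative
      (\<lambda>h. lam * (h \<bullet> sgn v) - deriv \<rho> (norm v) * (h \<bullet> sgn v))) (at v)"
    unfolding qlam_def abs_norm_cancel
    by (intro has_derivative_diff has_derivative_mult_right has_derivative_norm[OF False]
        has_derivative_compose[OF has_derivative_norm[OF False]] has_field_derivative_imp_has_derivative)
  then show ?thesis
    by (rule has_derivative_eq_rhs)
      (auto simp: False qlam_grad_def algebra_simps inner_commute)
qed

lemma grad_Lbar:
  fixes \<theta> :: "real^'q::finite^'p::finite"
  assumes "amenable \<rho> lam \<mu>"
  shows "grad (Lbar Gam gam \<rho> lam) \<theta> = grad (Ln Gam gam) \<theta> - (\<chi> i. qlam_grad \<rho> lam (\<theta> $ i))"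
proof (rule grad_eqI)
  have rows: "((\<lambda>\<theta>. qlam \<rho> lam (norm (\<theta> $ i))) has_derivative (\<lambda>h. qlam_grad \<rho> lam (\<theta> $ i) \<bullet> h $ i)) (at \<theta>)"
    for i
    by (rule has_derivative_compose[OF bounded_linear_imp_has_derivative[OF bounded_linear_vec_nth]
          qlam_norm_has_derivative[OF assms]])
  have "(Lbar Gam gam \<rho> lam has_derivative
      (\<lambda>h. grad (Ln Gam gam) \<theta> \<bullet> h - (\<Sum>i\<in>UNIV. qlam_grad \<rho> lam (\<theta> $ i) \<bullet> h $ i))) (at \<theta>)"
    unfolding Lbar_def[abs_def]
    by (intro has_derivative_diff has_derivative_grad Ln_differentiable has_derivative_sum rows)
  moreover have "(\<chi> i. qlam_grad \<rho> lam (\<theta> $ i)) \<bullet> h = (\<Sum>i\<in>UNIV. qlam_grad \<rho> lam (\<theta> $ i) \<bullet> h $ i)"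
    for h :: "real^'q^'p"
    by (simp only: inner_vec_def vec_lambda_beta)
  ultimately show "(Lbar Gam gam \<rho> lam has_derivative
      (\<lambda>h. (grad (Ln Gam gam) \<theta> - (\<chi> i. qlam_grad \<rho> lam (\<theta> $ i))) \<bullet> h)) (at \<theta>)"
    by (simp add: inner_diff_left)
qed

lemma norm_qlam_grad_diff_le:
  assumes amen: "amenable \<rho> lam \<mu>"
    and "v \<noteq> 0 \<Longrightarrow> z = sgn v" and "v = 0 \<Longrightarrow> norm z \<le> 1"
  shows "norm (qlam_grad \<rho> lam v - lam *\<^sub>R z) \<le> lam"
proof (cases "v = 0")
  case True
  have "0 \<le> lam" using amenable_deriv_bounds[OF amen, of 1] by linarith
  with True assms(3) show ?thesis by (simp add: qlam_grad_def mult_left_le)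
next
  case False
  then have "qlam_grad \<rho> lam v - lam *\<^sub>R z = (- deriv \<rho> (norm v)) *\<^sub>R sgn v"
    using assms(2) by (simp add: qlam_grad_def algebra_simps)
  then show ?thesis
    using False amenable_deriv_bounds[OF amen, of "norm v"] by (simp add: norm_sgn)
qed

lemma stationary_grad_Ln_row_le:
  assumes amen: "amenable \<rho> lam \<mu>" and "subgrad12 z \<theta>"
    and "(grad (Lbar Gam gam \<rho> lam) \<theta> + lam *\<^sub>R z) $ i = 0"
  shows "norm (grad (Ln Gam gam) \<theta> $ i) \<le> lam"
proof -
  have "grad (Ln Gam gam) \<theta> $ i = qlam_grad \<rho> lam (\<theta> $ i) - lam *\<^sub>R z $ i"
    using assms(3) by (simp add: grad_Lbar[OF amen] algebra_simps)
  then show ?thesis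
    using \<open>subgrad12 z \<theta>\<close> norm_qlam_grad_diff_le[OF amen, of "\<theta> $ i" "z $ i"]
    by (simp add: subgrad12_def sgn_div_norm)
qed

lemma norm12_nonneg: "0 \<le> norm12 A"
  unfolding norm12_def by (simp add: sum_nonneg)

lemma norm12_diff_le: "norm12 (A - B) \<le> norm12 A + norm12 B"
  unfolding norm12_def sum.distrib[symmetric] by (rule sum_mono) (simp add: norm_triangle_ineq4)

lemma norm_nth_le_norminf2: "norm (A $ i) \<le> norminf2 A"
  unfolding norminf2_def by (rule Max_ge) auto

lemma inner_le_norm12:
  assumes "\<And>i. B $ i \<noteq> 0 \<Longrightarrow> norm (A $ i) \<le> c"
  shows "A \<bullet> B \<le> c * norm12 B"
proof -
  have "A $ i \<bullet> B $ i \<le> c * norm (B $ i)" for i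
  proof (cases "B $ i = 0")
    case False
    have "A $ i \<bullet> B $ i \<le> norm (A $ i) * norm (B $ i)" by (rule norm_cauchy_schwarz)
    also have "\<dots> \<le> c * norm (B $ i)" using assms False by (simp add: mult_right_mono)
    finally show ?thesis .
  qed simp
  then have "(\<Sum>i\<in>UNIV. A $ i \<bullet> B $ i) \<le> (\<Sum>i\<in>UNIV. c * norm (B $ i))" by (rule sum_mono)
  then show ?thesis by (simp add: inner_vec_def norm12_def sum_distrib_left)
qed

text \<open>The sample size bound makes the tolerance term of the RSC at most \<open>\<alpha>\<^sub>2/2\<close> on \<open>\<parallel>\<Delta>\<parallel>\<^sub>1\<^sub>,\<^sub>2 \<le> 2R\<close>.\<close>
lemma joint_RSC_far_lower_bound:
  fixes L :: "real^'q::finite^'p::finite \<Rightarrow> real"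
  assumes rsc: "joint_RSC L n \<alpha>1 \<alpha>2 \<tau>1 \<tau>2" and "n > 0"
    and n_bound: "real n \<ge> 16 * R\<^sup>2 * \<tau>2\<^sup>2 / \<alpha>2\<^sup>2 * ln (real CARD('p))"
    and "norm12 \<Delta> \<le> 2 * R" and "1 \<le> norm \<Delta>"
  shows "\<alpha>2 * norm \<Delta> - \<alpha>2 / 2 \<le> (grad L (\<theta> + \<Delta>) - grad L \<theta>) \<bullet> \<Delta>"
proof -
  define c where "c = \<tau>2 * sqrt (ln (real CARD('p)) / real n)"
  have "\<alpha>2 > 0" and "\<tau>2 \<ge> 0" using rsc by (auto simp: joint_RSC_def)
  have "0 \<le> ln (real CARD('p)) / real n" by simp
  then have "(c * R)\<^sup>2 = \<tau>2\<^sup>2 * R\<^sup>2 * ln (real CARD('p)) / real n"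
    by (simp add: c_def power_mult_distrib)
  also have "\<dots> \<le> (\<alpha>2 / 4)\<^sup>2"
    using n_bound \<open>\<alpha>2 > 0\<close> \<open>n > 0\<close> by (simp add: field_simps power_divide)
  finally have "c * R \<le> \<alpha>2 / 4" by (rule power2_le_imp_le) (use \<open>\<alpha>2 > 0\<close> in simp)
  moreover have "c * norm12 \<Delta> \<le> c * (2 * R)"
    using \<open>\<tau>2 \<ge> 0\<close> \<open>norm12 \<Delta> \<le> 2 * R\<close> by (simp add: c_def mult_left_mono)
  ultimately have "c * norm12 \<Delta> \<le> \<alpha>2 / 2" by linarith
  moreover have "\<alpha>2 * norm \<Delta> - c * norm12 \<Delta> \<le> (grad L (\<theta> + \<Delta>) - grad L \<theta>) \<bullet> \<Delta>"
    using rsc \<open>1 \<le> norm \<Delta>\<close> unfolding joint_RSC_def c_def by blast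
  ultimately show ?thesis by linarith
qed

theorem lemma8:
  fixes S :: "'p::finite set"
    and Gam :: "'q::finite \<Rightarrow> real^'p^'p" and gam :: "'q \<Rightarrow> real^'p"
    and \<rho> :: "real \<Rightarrow> real" and lam \<mu> :: real
    and n :: nat and \<alpha>1 \<alpha>2 \<tau>1 \<tau>2 R :: real
    and \<theta>star \<theta>hat zhat :: "real^'q^'p"
  assumes Gam_sym: "\<And>j. transpose (Gam j) = Gam j"
    and Gam_psd: "\<And>j x. x \<bullet> (Gam j *v x) \<ge> 0"
    and n_pos: "n > 0"
    and amen: "amenable \<rho> lam \<mu>"
    and rsc: "joint_RSC (Ln Gam gam) n \<alpha>1 \<alpha>2 \<tau>1 \<tau>2"
    and supp_star: "\<And>i. i \<notin> S \<Longrightarrow> \<theta>star $ i = 0"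
    and supp_hat: "\<And>i. i \<notin> S \<Longrightarrow> \<theta>hat $ i = 0"
    and R_star: "norm12 \<theta>star \<le> R"
    and R_hat: "norm12 \<theta>hat \<le> R"
    and zhat_sub: "subgrad12 zhat \<theta>hat"
    and stationary: "\<And>i. i \<in> S \<Longrightarrow> (grad (Lbar Gam gam \<rho> lam) \<theta>hat + lam *\<^sub>R zhat) $ i = 0"
    and grad_bound: "norminf2 (grad (Ln Gam gam) \<theta>star) \<le> lam / 2"
    and lam_bound: "lam \<le> \<alpha>2 / (6 * R)"
    and n_bound: "real n \<ge> 16 * R\<^sup>2 * \<tau>2\<^sup>2 / \<alpha>2\<^sup>2 * ln (real CARD('p))"
  shows "norm (\<theta>hat - \<theta>star) \<le> 1"
proof -
  define \<Delta> where "\<Delta> = \<theta>hat - \<theta>star"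
  define D where "D = grad (Ln Gam gam) \<theta>hat - grad (Ln Gam gam) \<theta>star"
  have "\<alpha>2 > 0" using rsc by (simp add: joint_RSC_def)
  have "0 \<le> lam" using amenable_deriv_bounds[OF amen, of 1] by linarith
  have "0 \<le> R" using norm12_nonneg R_star by (rule order_trans)
  have "norm12 \<Delta> \<le> 2 * R" using norm12_diff_le[of \<theta>hat \<theta>star] R_hat R_star by (simp add: \<Delta>_def)
  have "norm (D $ i) \<le> 3/2 * lam" if "\<Delta> $ i \<noteq> 0" for i
  proof -
    have "i \<in> S" using that by (cases "i \<in> S") (simp_all add: \<Delta>_def supp_hat supp_star)
    then show ?thesis
      using stationary_grad_Ln_row_le[OF amen zhat_sub stationary] grad_bound
        norm_nth_le_norminf2[of "grad (Ln Gam gam) \<theta>star" i]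
        norm_triangle_ineq4[of "grad (Ln Gam gam) \<theta>hat $ i" "grad (Ln Gam gam) \<theta>star $ i"]
      by (fastforce simp: D_def)
  qed
  then have "D \<bullet> \<Delta> \<le> 3/2 * lam * norm12 \<Delta>" by (rule inner_le_norm12)
  also have "\<dots> \<le> 3 * lam * R"
    using mult_left_mono[OF \<open>norm12 \<Delta> \<le> 2 * R\<close>, of "3/2 * lam"] \<open>0 \<le> lam\<close> by simp
  also have "\<dots> \<le> \<alpha>2 / 2"
    using lam_bound \<open>0 \<le> R\<close> \<open>\<alpha>2 > 0\<close> by (cases "R = 0") (auto simp: field_simps)
  finally have upper: "D \<bullet> \<Delta> \<le> \<alpha>2 / 2" .
  show ?thesis
  proof (rule ccontr)
    assume far: "\<not> norm (\<theta>hat - \<theta>star) \<le> 1"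
    then have "\<alpha>2 * norm \<Delta> - \<alpha>2 / 2 \<le> D \<bullet> \<Delta>"
      using joint_RSC_far_lower_bound[OF rsc n_pos n_bound \<open>norm12 \<Delta> \<le> 2 * R\<close>, of \<theta>star]
      by (simp add: \<Delta>_def D_def)
    with upper have "\<alpha>2 * norm \<Delta> \<le> \<alpha>2 * 1" by linarith
    with \<open>\<alpha>2 > 0\<close> far show False by (simp add: \<Delta>_def)
  qed
qed

end
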